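(* Let $(X,Y)\sim P_{X,Y}$ be random variables in $\{0,1\}\times\mathcal{Y}$, $\mathcal{Y}=\{1,\dots,|\mathcal{Y}|\}$ with $|\mathcal{Y}|\ge 2$. For $i\neq j\in\mathcal{Y}$ let $f_{ij}$ be the map sending $i$ and $j$ to a common new symbol $y'\notin\mathcal{Y}$ and fixing every other symbol. Then there exist $i\neq j\in\mathcal{Y}$ such that \[ I(X;Y)-I(X;f_{ij}(Y))\leq\frac{128}{|\mathcal{Y}|^3}. \]
   Context: Logarithms (and mutual informations) are natural. *)

theory Defs
  imports "HOL-Probability.Probability_Mass_Function"
begin

text \<open>Mutual information (natural logarithm) of the two coordinates of a finitely
supported joint distribution, with the convention 0 ln 0 = 0 (sum over the support).\<close>
definition mutual_info :: "('a \<times> 'b) pmf \<Rightarrow> real" where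
  "mutual_info P =
     (\<Sum>xy\<in>set_pmf P. pmf P xy *
        ln (pmf P xy / (pmf (map_pmf fst P) (fst xy) * pmf (map_pmf snd P) (snd xy))))"

text \<open>The merging map f_ij on the alphabet {1..n}: i and j are sent to the new
symbol 0 (not in {1..n}), every other symbol is fixed.\<close>
definition merge_sym :: "nat \<Rightarrow> nat \<Rightarrow> nat \<Rightarrow> nat" where
  "merge_sym i j y = (if y = i \<or> y = j then 0 else y)"

end

theory Submission
  imports Defs
begin

text \<open>
  I(X;Y) is a sum of one term per column Y = y, and merging i and j only replaces the columns
  i and j by their sum. By ln x \<le> x - 1 the resulting loss is at most a chi-square divergence,
  which is at most 2 max(P(Y = i), P(Y = j)) times (sqrt p - sqrt q)^2 + (sqrt (1-p) - sqrt (1-q))^2,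
  where p, q are the probabilities of X = 1 given Y = i, j. This is at most
  min(2, (phi i - phi j)^2) with phi y = sqrt p_y - sqrt (1 - p_y) in [-1, 1]. More than half
  of the n symbols have P(Y = y) \<le> 2/n, and by pigeonhole two of these m symbols have
  phi-values within 2/(m-1) of each other, so the loss is at most (4/n) (32/n^2).
\<close>

lemma pmf_map_eq_sum:
  assumes "set_pmf P \<subseteq> S" "finite S"
  shows "pmf (map_pmf f P) z = (\<Sum>w\<in>{w\<in>S. f w = z}. pmf P w)"
proof -
  have "pmf (map_pmf f P) z = measure P (f -` {z})" by (rule pmf_map)
  also have "\<dots> = measure P {w\<in>S. f w = z}"
    by (rule measure_pmf.finite_measure_eq_AE) (use assms(1) in \<open>auto simp: AE_measure_pmf_iff\<close>)
  also have "\<dots> = (\<Sum>w\<in>{w\<in>S. f w = z}. pmf P w)"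
    using assms(2) by (simp add: measure_measure_pmf_finite)
  finally show ?thesis .
qed

lemma pmf_snd_binary:
  fixes P :: "(nat \<times> 'b) pmf"
  assumes "set_pmf P \<subseteq> {0, 1} \<times> Y" "finite Y"
  shows "pmf (map_pmf snd P) y = pmf P (0, y) + pmf P (1, y)"
proof -
  have "pmf (map_pmf snd P) y = (\<Sum>w\<in>{w\<in>{0, 1} \<times> insert y Y. snd w = y}. pmf P w)"
    by (rule pmf_map_eq_sum) (use assms in auto)
  also have "{w\<in>{0, 1} \<times> insert y Y. snd w = y} = {(0, y), (1, y)}" by auto
  finally show ?thesis by simp
qed

lemma pmf_le_pmf_snd: "pmf P (x, y) \<le> pmf (map_pmf snd P) y"
proof -
  have "pmf P (x, y) = measure P {(x, y)}" by (simp add: measure_pmf_single)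
  also have "\<dots> \<le> measure P (snd -` {y})"
    by (rule measure_pmf.finite_measure_mono) auto
  finally show ?thesis by (simp add: pmf_map)
qed

lemma pmf_div_pmf_snd_le_1: "pmf P (x, y) / pmf (map_pmf snd P) y \<le> 1"
  using pmf_le_pmf_snd[of P x y] by (auto simp: divide_le_eq_1)

lemma pmf_pair_le_pmf_fst:
  assumes "i \<noteq> j"
  shows "pmf P (x, i) + pmf P (x, j) \<le> pmf (map_pmf fst P) x"
proof -
  have "pmf P (x, i) + pmf P (x, j) = measure P {(x, i), (x, j)}"
    using assms by (simp add: measure_measure_pmf_finite)
  also have "\<dots> \<le> measure P (fst -` {x})"
    by (rule measure_pmf.finite_measure_mono) auto
  finally show ?thesis by (simp add: pmf_map)
qed

text \<open>The contribution of the column Y = y, given by c x = P(x, y), to I(X;Y); r is the law of X.\<close>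
definition column_info :: "(nat \<Rightarrow> real) \<Rightarrow> (nat \<Rightarrow> real) \<Rightarrow> real" where
  "column_info r c = (\<Sum>x\<in>{0, 1}. c x * ln (c x / (r x * (c 0 + c 1))))"

lemma mutual_info_eq_sum_column_info:
  fixes P :: "(nat \<times> 'b) pmf"
  assumes sub: "set_pmf P \<subseteq> {0, 1} \<times> Y" and fin: "finite Y"
  shows "mutual_info P = (\<Sum>y\<in>Y. column_info (pmf (map_pmf fst P)) (\<lambda>x. pmf P (x, y)))"
proof -
  let ?term = "\<lambda>x y. pmf P (x, y) * ln (pmf P (x, y) / (pmf (map_pmf fst P) x * pmf (map_pmf snd P) y))"
  have "mutual_info P = (\<Sum>(x, y)\<in>{0, 1} \<times> Y. ?term x y)"
    unfolding mutual_info_def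
    by (rule sum.mono_neutral_cong_left) (use sub fin in \<open>auto simp: set_pmf_iff\<close>)
  also have "\<dots> = (\<Sum>y\<in>Y. \<Sum>x\<in>{0, 1}. ?term x y)"
    by (subst sum.cartesian_product[symmetric]) (rule sum.swap)
  also have "\<dots> = (\<Sum>y\<in>Y. column_info (pmf (map_pmf fst P)) (\<lambda>x. pmf P (x, y)))"
    unfolding column_info_def pmf_snd_binary[OF sub fin] by simp
  finally show ?thesis .
qed

lemma mutual_info_merge_sym_loss:
  fixes P :: "(nat \<times> nat) pmf"
  assumes sub: "set_pmf P \<subseteq> {0, 1} \<times> Y" and fin: "finite Y" and "0 \<notin> Y"
    and ij: "i \<in> Y" "j \<in> Y" "i \<noteq> j"
  defines "r \<equiv> pmf (map_pmf fst P)"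
  shows "mutual_info P - mutual_info (map_pmf (\<lambda>(x, y). (x, merge_sym i j y)) P)
     = column_info r (\<lambda>x. pmf P (x, i)) + column_info r (\<lambda>x. pmf P (x, j))
       - column_info r (\<lambda>x. pmf P (x, i) + pmf P (x, j))"
proof -
  define f where "f = (\<lambda>(x::nat, y). (x, merge_sym i j y))"
  define Q where "Q = map_pmf f P"
  define R where "R = Y - {i, j}"
  define S where "S = {0, 1::nat} \<times> Y"
  have "map_pmf fst Q = map_pmf fst P"
    unfolding Q_def f_def map_pmf_comp by (simp add: case_prod_beta)
  then have fstQ: "pmf (map_pmf fst Q) = r" unfolding r_def by simp
  have "f ` ({0, 1} \<times> Y) \<subseteq> {0, 1} \<times> insert 0 R"
    by (auto simp: f_def R_def merge_sym_def split: if_splits)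
  then have subQ: "set_pmf Q \<subseteq> {0, 1} \<times> insert 0 R"
    using sub unfolding Q_def by auto
  have pmfQ: "pmf Q z = (\<Sum>w\<in>{w\<in>S. f w = z}. pmf P w)" for z
    unfolding Q_def by (rule pmf_map_eq_sum) (use sub fin in \<open>auto simp: S_def\<close>)
  have Q_merged: "pmf Q (x, 0) = pmf P (x, i) + pmf P (x, j)" if "x \<in> {0, 1}" for x
  proof -
    have "{w\<in>S. f w = (x, 0)} = {(x, i), (x, j)}"
      using that ij \<open>0 \<notin> Y\<close> by (auto simp: S_def f_def merge_sym_def split: if_splits)
    then show ?thesis using ij by (simp add: pmfQ)
  qed
  have Q_other: "pmf Q (x, y) = pmf P (x, y)" if "x \<in> {0, 1}" "y \<in> R" for x y
  proof -
    have "{w\<in>S. f w = (x, y)} = {(x, y)}"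
      using that \<open>0 \<notin> Y\<close> by (auto simp: S_def f_def merge_sym_def R_def)
    then show ?thesis by (simp add: pmfQ)
  qed
  have "mutual_info Q = (\<Sum>y\<in>insert 0 R. column_info r (\<lambda>x. pmf Q (x, y)))"
    using mutual_info_eq_sum_column_info[OF subQ] fstQ fin by (simp add: R_def)
  also have "\<dots> = column_info r (\<lambda>x. pmf P (x, i) + pmf P (x, j))
                 + (\<Sum>y\<in>R. column_info r (\<lambda>x. pmf P (x, y)))"
    using \<open>0 \<notin> Y\<close> fin by (simp add: R_def column_info_def Q_merged Q_other)
  finally have MQ: "mutual_info Q = \<dots>" .
  have "insert i (insert j R) = Y" using ij by (auto simp: R_def)
  then have "mutual_info P = (\<Sum>y\<in>insert i (insert j R). column_info r (\<lambda>x. pmf P (x, y)))"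
    using mutual_info_eq_sum_column_info[OF sub fin] unfolding r_def by simp
  also have "\<dots> = column_info r (\<lambda>x. pmf P (x, i)) + column_info r (\<lambda>x. pmf P (x, j))
                 + (\<Sum>y\<in>R. column_info r (\<lambda>x. pmf P (x, y)))"
    using ij fin by (simp add: R_def add.assoc)
  finally show ?thesis using MQ unfolding Q_def f_def by simp
qed

lemma mult_ln_ratio_le:
  fixes c t r m :: real
  assumes "0 \<le> c" "0 \<le> t" "0 < r" "0 < m"
  shows "c * t * ln (c * t / (r * c)) - c * t * ln (m / r) \<le> c * t * (t / m - 1)"
proof (cases "c * t = 0")
  case False
  with assms have "0 < c" "0 < t" by auto
  then have "ln (c * t / (r * c)) - ln (m / r) = ln (t / m)"
    using assms by (simp add: ln_div)
  also have "\<dots> \<le> t / m - 1"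
    using \<open>0 < t\<close> assms by (intro ln_le_minus_one) simp
  finally show ?thesis
    using \<open>0 < c\<close> \<open>0 < t\<close> by (simp add: right_diff_distrib[symmetric] mult_left_mono)
qed auto

lemma two_point_chi_square_eq:
  fixes a b p q :: real
  assumes "a * p + b * q \<noteq> 0"
  shows "a * p * (p * (a + b) / (a * p + b * q) - 1) + b * q * (q * (a + b) / (a * p + b * q) - 1)
       = a * b * (p - q)^2 / (a * p + b * q)"
proof -
  let ?D = "a * p + b * q"
  have "a * p * (p * (a + b) / ?D - 1) + b * q * (q * (a + b) / ?D - 1)
      = (a + b) * (a * p^2 + b * q^2) / ?D - ?D"
    by (simp add: add_divide_distrib power2_eq_square algebra_simps)
  also have "\<dots> = ((a + b) * (a * p^2 + b * q^2) - ?D^2) / ?D"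
    using assms by (simp add: diff_divide_distrib power2_eq_square)
  also have "(a + b) * (a * p^2 + b * q^2) - ?D^2 = a * b * (p - q)^2"
    by (simp add: power2_eq_square algebra_simps)
  finally show ?thesis .
qed

lemma two_point_chi_square_le:
  fixes a b x y :: real
  assumes "0 \<le> a" "0 \<le> b" "0 \<le> x" "0 \<le> y" "0 < a * x^2 + b * y^2"
  shows "a * b * (x^2 - y^2)^2 / (a * x^2 + b * y^2) \<le> 2 * max a b * (x - y)^2"
proof -
  have "(x + y)^2 \<le> 2 * (x^2 + y^2)"
    using zero_le_power2[of "x - y"] by (simp add: power2_eq_square algebra_simps)
  then have "a * b * (x + y)^2 \<le> a * b * (2 * (x^2 + y^2))"
    using assms by (intro mult_left_mono) auto
  also have "\<dots> = 2 * (a * b * x^2 + a * b * y^2)"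
    by (simp add: algebra_simps)
  also have "a * b * x^2 + a * b * y^2 \<le> max a b * (a * x^2 + b * y^2)"
  proof -
    have "(a * x^2) * b \<le> (a * x^2) * max a b" "(b * y^2) * a \<le> (b * y^2) * max a b"
      using assms by (intro mult_left_mono; simp)+
    then show ?thesis by (simp add: algebra_simps)
  qed
  finally have "a * b * (x + y)^2 * (x - y)^2 \<le> 2 * max a b * (a * x^2 + b * y^2) * (x - y)^2"
    by (intro mult_right_mono) auto
  moreover have "(x^2 - y^2)^2 = (x + y)^2 * (x - y)^2"
    by (simp add: power2_eq_square algebra_simps)
  ultimately show ?thesis
    using assms(5) by (simp add: divide_le_eq mult_ac)
qed

lemma merge_ln_gap_le:
  fixes a b p q r :: real
  assumes "0 \<le> a" "0 \<le> b" "0 \<le> p" "0 \<le> q" "a * p + b * q \<le> r"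
  shows "a * p * ln (a * p / (r * a)) + b * q * ln (b * q / (r * b))
         - (a * p + b * q) * ln ((a * p + b * q) / (r * (a + b)))
       \<le> 2 * max a b * (sqrt p - sqrt q)^2"
proof (cases "a * p + b * q = 0")
  case True
  then have "a * p = 0" "b * q = 0"
    using assms by (simp_all add: add_nonneg_eq_0_iff)
  then show ?thesis
    unfolding \<open>a * p = 0\<close> \<open>b * q = 0\<close> using assms by simp
next
  case False
  let ?D = "a * p + b * q"
  define m where "m = ?D / (a + b)"
  have "0 < ?D" using False assms by (simp add: order_le_neq_trans)
  have "0 < a + b"
    using \<open>0 < ?D\<close> assms by (cases "a + b = 0") (auto simp: add_nonneg_eq_0_iff)
  have "0 < r" "0 < m"
    using \<open>0 < ?D\<close> \<open>0 < a + b\<close> assms by (auto simp: m_def)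
  have "?D / (r * (a + b)) = m / r" by (simp add: m_def)
  then have "a * p * ln (a * p / (r * a)) + b * q * ln (b * q / (r * b)) - ?D * ln (?D / (r * (a + b)))
      = (a * p * ln (a * p / (r * a)) - a * p * ln (m / r))
        + (b * q * ln (b * q / (r * b)) - b * q * ln (m / r))"
    by (simp add: algebra_simps)
  also have "\<dots> \<le> a * p * (p / m - 1) + b * q * (q / m - 1)"
    using mult_ln_ratio_le[of a p r m] mult_ln_ratio_le[of b q r m] assms \<open>0 < r\<close> \<open>0 < m\<close>
    by linarith
  also have "\<dots> = a * b * ((sqrt p)^2 - (sqrt q)^2)^2 / (a * (sqrt p)^2 + b * (sqrt q)^2)"
    using two_point_chi_square_eq[OF False] assms by (simp add: m_def)
  also have "\<dots> \<le> 2 * max a b * (sqrt p - sqrt q)^2"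
    using \<open>0 < ?D\<close> assms by (intro two_point_chi_square_le) auto
  finally show ?thesis .
qed

definition bernoulli_hellinger :: "real \<Rightarrow> real \<Rightarrow> real" where
  "bernoulli_hellinger p q = (sqrt p - sqrt q)^2 + (sqrt (1 - p) - sqrt (1 - q))^2"

lemma bernoulli_hellinger_le_2:
  assumes "0 \<le> p" "p \<le> 1" "0 \<le> q" "q \<le> 1"
  shows "bernoulli_hellinger p q \<le> 2"
proof -
  have "bernoulli_hellinger p q = 2 - 2 * (sqrt p * sqrt q) - 2 * (sqrt (1 - p) * sqrt (1 - q))"
    using assms by (simp add: bernoulli_hellinger_def power2_diff)
  moreover have "0 \<le> sqrt p * sqrt q" "0 \<le> sqrt (1 - p) * sqrt (1 - q)"
    using assms by auto
  ultimately show ?thesis by linarith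
qed

lemma bernoulli_hellinger_le_diff_sq:
  assumes "0 \<le> p" "p \<le> 1" "0 \<le> q" "q \<le> 1"
  shows "bernoulli_hellinger p q \<le> ((sqrt p - sqrt (1 - p)) - (sqrt q - sqrt (1 - q)))^2"
proof -
  have "0 \<le> (sqrt p - sqrt q) * (sqrt (1 - q) - sqrt (1 - p))"
  proof (cases "p \<le> q")
    case True
    then have "sqrt p \<le> sqrt q" "sqrt (1 - q) \<le> sqrt (1 - p)" by auto
    then show ?thesis by (simp add: mult_nonpos_nonpos)
  next
    case False
    then have "sqrt q \<le> sqrt p" "sqrt (1 - p) \<le> sqrt (1 - q)" by auto
    then show ?thesis by simp
  qed
  moreover have "((sqrt p - sqrt (1 - p)) - (sqrt q - sqrt (1 - q)))^2
      = bernoulli_hellinger p q + 2 * ((sqrt p - sqrt q) * (sqrt (1 - q) - sqrt (1 - p)))"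
    by (simp add: bernoulli_hellinger_def power2_eq_square algebra_simps)
  ultimately show ?thesis by linarith
qed

lemma sqrt_diff_sqrt_complement_bounds:
  fixes p :: real
  assumes "0 \<le> p" "p \<le> 1"
  shows "-1 \<le> sqrt p - sqrt (1 - p)" "sqrt p - sqrt (1 - p) \<le> 1"
proof -
  have "0 \<le> sqrt p" "sqrt p \<le> 1" "0 \<le> sqrt (1 - p)" "sqrt (1 - p) \<le> 1"
    using assms by auto
  then show "-1 \<le> sqrt p - sqrt (1 - p)" "sqrt p - sqrt (1 - p) \<le> 1" by linarith+
qed

lemma column_info_merge_le:
  fixes a b p q :: real and r cA cB :: "nat \<Rightarrow> real"
  assumes "0 \<le> a" "0 \<le> b" "0 \<le> p" "p \<le> 1" "0 \<le> q" "q \<le> 1"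
    and cA: "cA 0 = a * (1 - p)" "cA 1 = a * p" and cB: "cB 0 = b * (1 - q)" "cB 1 = b * q"
    and r: "cA 0 + cB 0 \<le> r 0" "cA 1 + cB 1 \<le> r 1"
  shows "column_info r cA + column_info r cB - column_info r (\<lambda>x. cA x + cB x)
    \<le> 2 * max a b * bernoulli_hellinger p q"
proof -
  have masses: "cA 0 + cA 1 = a" "cB 0 + cB 1 = b" "cA 0 + cB 0 + (cA 1 + cB 1) = a + b"
    unfolding cA cB by (simp_all add: algebra_simps)
  have "column_info r cA + column_info r cB - column_info r (\<lambda>x. cA x + cB x)
    = (a * (1 - p) * ln (a * (1 - p) / (r 0 * a)) + b * (1 - q) * ln (b * (1 - q) / (r 0 * b))
        - (a * (1 - p) + b * (1 - q)) * ln ((a * (1 - p) + b * (1 - q)) / (r 0 * (a + b))))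
    + (a * p * ln (a * p / (r 1 * a)) + b * q * ln (b * q / (r 1 * b))
        - (a * p + b * q) * ln ((a * p + b * q) / (r 1 * (a + b))))"
    using cA cB unfolding column_info_def masses by simp
  also have "\<dots> \<le> 2 * max a b * (sqrt (1 - p) - sqrt (1 - q))^2 + 2 * max a b * (sqrt p - sqrt q)^2"
    using assms by (intro add_mono merge_ln_gap_le) auto
  also have "\<dots> = 2 * max a b * bernoulli_hellinger p q"
    by (simp add: bernoulli_hellinger_def algebra_simps)
  finally show ?thesis .
qed

lemma mutual_info_merge_sym_loss_le:
  fixes P :: "(nat \<times> nat) pmf"
  assumes sub: "set_pmf P \<subseteq> {0, 1} \<times> Y" and fin: "finite Y" and "0 \<notin> Y"
    and ij: "i \<in> Y" "j \<in> Y" "i \<noteq> j"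
  defines "pY \<equiv> pmf (map_pmf snd P)"
  defines "s \<equiv> \<lambda>y. pmf P (1, y) / pY y" \<comment> \<open>P(X = 1 | Y = y), and 0 if P(Y = y) = 0\<close>
  shows "mutual_info P - mutual_info (map_pmf (\<lambda>(x, y). (x, merge_sym i j y)) P)
    \<le> 2 * max (pY i) (pY j) * bernoulli_hellinger (s i) (s j)"
proof -
  have column: "0 \<le> pY y" "0 \<le> s y" "s y \<le> 1"
    "pmf P (0, y) = pY y * (1 - s y)" "pmf P (1, y) = pY y * s y" for y
  proof -
    show "0 \<le> pY y" "0 \<le> s y" "s y \<le> 1"
      by (simp_all add: s_def pY_def pmf_div_pmf_snd_le_1)
    show P1: "pmf P (1, y) = pY y * s y"
      using pmf_le_pmf_snd[of P 1 y] by (cases "pY y = 0") (simp_all add: s_def pY_def)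
    have "pY y = pmf P (0, y) + pmf P (1, y)"
      unfolding pY_def by (rule pmf_snd_binary[OF sub fin])
    then show "pmf P (0, y) = pY y * (1 - s y)"
      using P1 by (simp add: algebra_simps)
  qed
  show ?thesis
    unfolding mutual_info_merge_sym_loss[OF assms(1-6)]
    using pmf_pair_le_pmf_fst[OF \<open>i \<noteq> j\<close>, of P 0] pmf_pair_le_pmf_fst[OF \<open>i \<noteq> j\<close>, of P 1] column
    by (intro column_info_merge_le) auto
qed

lemma pigeonhole_close_pair:
  fixes g :: "'a \<Rightarrow> real"
  assumes card: "2 \<le> card T" and "lo < hi" and range: "g ` T \<subseteq> {lo..hi}"
  shows "\<exists>i\<in>T. \<exists>j\<in>T. i \<noteq> j \<and> \<bar>g i - g j\<bar> \<le> (hi - lo) / (real (card T) - 1)"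
proof -
  define m where "m = card T"
  define v where "v y = (g y - lo) * (real m - 1) / (hi - lo)" for y
  define k where "k y = min (m - 2) (nat \<lfloor>v y\<rfloor>)" for y
    \<comment> \<open>the index of the unit bucket of [0, m - 1] containing v y: only m - 1 buckets for m points\<close>
  have "0 < real m - 1" using card by (simp add: m_def)
  have v_range: "0 \<le> v y \<and> v y \<le> real m - 1" if "y \<in> T" for y
  proof -
    have "0 \<le> g y - lo" "g y - lo \<le> hi - lo" using range that by auto
    then show ?thesis
      using \<open>0 < real m - 1\<close> \<open>lo < hi\<close>
      by (auto simp: v_def divide_le_eq mult.commute mult_left_mono)
  qed
  have k_v: "real (k y) \<le> v y \<and> v y \<le> real (k y) + 1" if "y \<in> T" for y
  proof (cases "nat \<lfloor>v y\<rfloor> \<le> m - 2")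
    case True
    then show ?thesis using v_range[OF that] by (simp add: k_def)
  next
    case False
    then have "real m - 1 \<le> v y" by linarith
    then show ?thesis using v_range[OF that] card by (simp add: k_def m_def of_nat_diff)
  qed
  have "card (k ` T) \<le> card {..m - 2}"
    by (rule card_mono) (auto simp: k_def)
  then have "card (k ` T) < card T" using card by (simp add: m_def)
  then obtain i j where ij: "i \<in> T" "j \<in> T" "i \<noteq> j" "k i = k j"
    using pigeonhole unfolding inj_on_def by blast
  have "\<bar>v i - v j\<bar> \<le> 1" using k_v[OF ij(1)] k_v[OF ij(2)] ij(4) by linarith
  moreover have "v i - v j = (g i - g j) * (real m - 1) / (hi - lo)"
    by (simp add: v_def diff_divide_distrib[symmetric] algebra_simps)
  ultimately have "\<bar>g i - g j\<bar> * (real m - 1) \<le> hi - lo"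
    using \<open>lo < hi\<close> \<open>0 < real m - 1\<close> by (simp add: abs_mult abs_div divide_le_eq)
  then show ?thesis
    using ij \<open>0 < real m - 1\<close> by (auto simp: m_def le_divide_eq)
qed

lemma card_light_elements_gt:
  fixes w :: "'a \<Rightarrow> real"
  assumes fin: "finite Y" and nonneg: "\<And>y. y \<in> Y \<Longrightarrow> 0 \<le> w y" and "sum w Y \<le> 1" and "0 < c"
  shows "real (card Y) - 1 / c < real (card {y\<in>Y. w y \<le> c})"
proof -
  define H where "H = {y\<in>Y. c < w y}"
  have "real (card H) * c < 1"
  proof (cases "H = {}")
    case False
    have "real (card H) * c = (\<Sum>y\<in>H. c)" by simp
    also have "\<dots> < (\<Sum>y\<in>H. w y)"
      using False fin by (intro sum_strict_mono) (auto simp: H_def)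
    also have "\<dots> \<le> sum w Y"
      using fin nonneg by (intro sum_mono2) (auto simp: H_def)
    finally show ?thesis using \<open>sum w Y \<le> 1\<close> by linarith
  qed simp
  then have "real (card H) < 1 / c" using \<open>0 < c\<close> by (simp add: field_simps)
  moreover have "card {y\<in>Y. w y \<le> c} + card H = card Y"
    using fin by (subst card_Un_disjoint[symmetric]) (auto simp: H_def intro: arg_cong[where f = card])
  ultimately show ?thesis by (simp flip: of_nat_add)
qed

lemma min_2_gap_sq_le:
  fixes n m :: nat
  assumes "2 \<le> n" "real n < 2 * real m"
  shows "min 2 ((2 / (real m - 1))^2) \<le> 32 / real n ^ 2"
proof (cases "n \<le> 4")
  case True
  have "real n ^ 2 \<le> 4 ^ 2" using True by (intro power_mono) auto
  then have "2 \<le> 32 / real n ^ 2"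
    using assms by (simp add: field_simps)
  then show ?thesis by linarith
next
  case False
  have "n + 1 \<le> 2 * m" using assms(2) by linarith
  then have "real (n + 1) \<le> real (2 * m)" by (simp only: of_nat_le_iff)
  then have "real n - 1 \<le> 2 * (real m - 1)" by simp
  moreover have "0 < real n - 1" using False by simp
  ultimately have "(real n - 1)^2 \<le> (2 * (real m - 1))^2" by (intro power_mono) auto
  moreover have "real n ^ 2 \<le> 2 * (real n - 1)^2"
  proof -
    have "real n * 4 \<le> real n * real n" using False by (intro mult_left_mono) auto
    then show ?thesis by (simp add: power2_eq_square algebra_simps)
  qed
  moreover have "(2 * (real m - 1))^2 = 4 * (real m - 1)^2" unfolding power_mult_distrib by simp
  ultimately have nm: "real n ^ 2 \<le> 8 * (real m - 1)^2" by linarith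
  have "0 < real m - 1" using False \<open>n + 1 \<le> 2 * m\<close> by simp
  have "min 2 ((2 / (real m - 1))^2) \<le> 4 / (real m - 1)^2"
    by (simp add: power_divide)
  also have "\<dots> = 32 / (8 * (real m - 1)^2)"
    by simp
  also have "\<dots> \<le> 32 / real n ^ 2"
    using nm False \<open>0 < real m - 1\<close> by (intro divide_left_mono) auto
  finally show ?thesis .
qed

lemma light_close_pair:
  fixes w g :: "'a \<Rightarrow> real"
  assumes fin: "finite Y" and "2 \<le> card Y" and nonneg: "\<And>y. y \<in> Y \<Longrightarrow> 0 \<le> w y"
    and sum: "sum w Y \<le> 1" and range: "g ` Y \<subseteq> {-1..1}"
  shows "\<exists>i\<in>Y. \<exists>j\<in>Y. i \<noteq> j \<and> w i \<le> 2 / real (card Y) \<and> w j \<le> 2 / real (card Y)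
           \<and> min 2 ((g i - g j)^2) \<le> 32 / real (card Y) ^ 2"
proof -
  define T where "T = {y\<in>Y. w y \<le> 2 / real (card Y)}"
  have "real (card Y) < 2 * real (card T)"
    using card_light_elements_gt[OF fin nonneg sum, of "2 / real (card Y)"] \<open>2 \<le> card Y\<close>
    by (simp add: T_def)
  then have "2 \<le> card T" using \<open>2 \<le> card Y\<close> by linarith
  moreover have "g ` T \<subseteq> {-1..1}" using range by (auto simp: T_def)
  ultimately obtain i j where ij: "i \<in> T" "j \<in> T" "i \<noteq> j"
    and close: "\<bar>g i - g j\<bar> \<le> 2 / (real (card T) - 1)"
    using pigeonhole_close_pair[of T "-1" 1 g] by auto
  have "min 2 ((g i - g j)^2) \<le> min 2 ((2 / (real (card T) - 1))^2)"
    using power_mono[OF close abs_ge_zero, of 2] by simp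
  also have "\<dots> \<le> 32 / real (card Y) ^ 2"
    using \<open>2 \<le> card Y\<close> \<open>real (card Y) < 2 * real (card T)\<close> by (rule min_2_gap_sq_le)
  finally show ?thesis using ij by (auto simp: T_def)
qed

theorem theorem5:
  fixes P :: "(nat \<times> nat) pmf" and n :: nat
  assumes "n \<ge> 2"
    and "set_pmf P \<subseteq> {0, 1} \<times> {1..n}"
  shows "\<exists>i\<in>{1..n}. \<exists>j\<in>{1..n}. i \<noteq> j \<and>
           mutual_info P - mutual_info (map_pmf (\<lambda>(x, y). (x, merge_sym i j y)) P)
             \<le> 128 / real n ^ 3"
proof -
  define pY where "pY = pmf (map_pmf snd P)"
  define s where "s y = pmf P (1, y) / pY y" for y
  define \<phi> where "\<phi> y = sqrt (s y) - sqrt (1 - s y)" for y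
  have s: "0 \<le> s y" "s y \<le> 1" for y
    by (simp_all add: s_def pY_def pmf_div_pmf_snd_le_1)
  have "sum pY {1..n} = 1"
    unfolding pY_def using assms(2) by (intro sum_pmf_eq_1) auto
  moreover have "\<phi> ` {1..n} \<subseteq> {-1..1}"
    using sqrt_diff_sqrt_complement_bounds[OF s] by (auto simp: \<phi>_def)
  ultimately obtain i j where ij: "i \<in> {1..n}" "j \<in> {1..n}" "i \<noteq> j"
    and light: "pY i \<le> 2 / real n" "pY j \<le> 2 / real n"
    and close: "min 2 ((\<phi> i - \<phi> j)^2) \<le> 32 / real n ^ 2"
    using light_close_pair[of "{1..n}" pY \<phi>] assms(1) by (auto simp: pY_def)
  have hellinger: "bernoulli_hellinger (s i) (s j) \<le> min 2 ((\<phi> i - \<phi> j)^2)"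
    using bernoulli_hellinger_le_2[OF s s] bernoulli_hellinger_le_diff_sq[OF s s] by (simp add: \<phi>_def)
  have "mutual_info P - mutual_info (map_pmf (\<lambda>(x, y). (x, merge_sym i j y)) P)
      \<le> 2 * max (pY i) (pY j) * bernoulli_hellinger (s i) (s j)"
    using ij unfolding pY_def s_def by (intro mutual_info_merge_sym_loss_le[OF assms(2)]) auto
  also have "\<dots> \<le> 4 / real n * (32 / real n ^ 2)"
    using light close hellinger
    by (intro mult_mono) (auto simp: bernoulli_hellinger_def)
  also have "\<dots> = 128 / real n ^ 3"
    by (simp add: power2_eq_square power3_eq_cube)
  finally show ?thesis using ij by blast
qed

end
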